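(* Let $G=(V,E)$ be a finite simple undirected graph, let $M$ be computed by a run of \textsc{MinGreedy} on $G$, and let $M^*$ be a maximum matching such that each component of $(V,M\cup M^* )$ with an edge is an edge of $M\cap M^*$ or an $M$-$M^*$-path. Let $w$ be an endpoint of an $M$-$M^*$-path $X$. Then $w$ is the target of at least one transfer, and $X$ (i.e. its two endpoints together) is the target of at least two transfers.
   Context: \textsc{MinGreedy}: starting with $M=\emptyset$, repeatedly select an arbitrary node $u$ of minimum non-zero current degree and an arbitrary neighbor $v$ of $u$, add $\{u,v\}$ to $M$ and remove all edges incident with $u$ or $v$ from the current graph. An $M$-$M^*$-path is a component of $(V,M\cup M^* )$ that is an alternating path starting and ending with an $M^*$-edge, with $m\geq1$ edges of $M$ and $m+1$ edges of $M^*$; its endpoints are its two $M$-uncovered end nodes. Let $F=E\setminus(M\cup M^* )$. For an endpoint $w$ of an $M$-$M^*$-path, an edge $\{v,w\}\in F$ is a transfer from $v$ to $w$ if, in the step of the algorithm in which $v$ is matched, the current degree of $w$ drops to at most $1$. *)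

theory Defs
  imports Main
begin

definition simple_graph :: "'a set \<Rightarrow> 'a set set \<Rightarrow> bool" where
  "simple_graph V E \<longleftrightarrow> finite V \<and>
     (\<forall>e\<in>E. \<exists>x y. x \<noteq> y \<and> x \<in> V \<and> y \<in> V \<and> e = {x, y})"

definition matching :: "'a set set \<Rightarrow> 'a set set \<Rightarrow> bool" where
  "matching E M \<longleftrightarrow> M \<subseteq> E \<and> (\<forall>e\<in>M. \<forall>f\<in>M. e \<noteq> f \<longrightarrow> e \<inter> f = {})"

definition max_matching :: "'a set set \<Rightarrow> 'a set set \<Rightarrow> bool" where
  "max_matching E M \<longleftrightarrow> matching E M \<and> (\<forall>M'. matching E M' \<longrightarrow> card M' \<le> card M)"

definition deg :: "'a set set \<Rightarrow> 'a \<Rightarrow> nat" where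
  "deg G x = card {e \<in> G. x \<in> e}"

text \<open>A run of MinGreedy is the list ss of chosen pairs (u,v), u first.
  The current graph before step i consists of the edges of E not incident
  with any node matched in steps 0..i-1.\<close>
definition cur :: "'a set set \<Rightarrow> ('a \<times> 'a) list \<Rightarrow> nat \<Rightarrow> 'a set set" where
  "cur E ss i = {e \<in> E. \<forall>j<i. fst (ss ! j) \<notin> e \<and> snd (ss ! j) \<notin> e}"

definition mingreedy_run :: "'a set set \<Rightarrow> ('a \<times> 'a) list \<Rightarrow> bool" where
  "mingreedy_run E ss \<longleftrightarrow>
     (\<forall>i<length ss. {fst (ss ! i), snd (ss ! i)} \<in> cur E ss i \<and>
        (\<forall>x. 0 < deg (cur E ss i) x \<longrightarrow> deg (cur E ss i) (fst (ss ! i)) \<le> deg (cur E ss i) x))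
     \<and> cur E ss (length ss) = {}"

definition greedy_matching :: "('a \<times> 'a) list \<Rightarrow> 'a set set" where
  "greedy_matching ss = {{u, v} | u v. (u, v) \<in> set ss}"

definition path_edges :: "'a list \<Rightarrow> 'a set set" where
  "path_edges p = {{p ! j, p ! Suc j} | j. Suc j < length p}"

text \<open>An M-M*-path: a component of (V, M \<union> M*) which is an alternating path
  x_0 ... x_{2m+1} (m \<ge> 1) starting and ending with an M*-edge.\<close>
definition mm_path :: "'a set set \<Rightarrow> 'a set set \<Rightarrow> 'a list \<Rightarrow> bool" where
  "mm_path M Ms p \<longleftrightarrow> distinct p \<and> even (length p) \<and> 4 \<le> length p \<and>
     (\<forall>j. Suc j < length p \<longrightarrow>
        (even j \<longrightarrow> {p ! j, p ! Suc j} \<in> Ms) \<and> (odd j \<longrightarrow> {p ! j, p ! Suc j} \<in> M)) \<and>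
     (\<forall>e \<in> M \<union> Ms. e \<inter> set p \<noteq> {} \<longrightarrow> e \<in> path_edges p)"

definition components_ok :: "'a set set \<Rightarrow> 'a set set \<Rightarrow> bool" where
  "components_ok M Ms \<longleftrightarrow> (\<forall>e \<in> M \<union> Ms.
      (e \<in> M \<inter> Ms \<and> (\<forall>f \<in> M \<union> Ms. f \<inter> e \<noteq> {} \<longrightarrow> f = e))
    \<or> (\<exists>p. mm_path M Ms p \<and> e \<in> path_edges p))"

definition mm_endpoint :: "'a set set \<Rightarrow> 'a set set \<Rightarrow> 'a \<Rightarrow> bool" where
  "mm_endpoint M Ms w \<longleftrightarrow> (\<exists>p. mm_path M Ms p \<and> w \<in> {hd p, last p})"

definition transfer :: "'a set set \<Rightarrow> ('a \<times> 'a) list \<Rightarrow> 'a set set \<Rightarrow> 'a \<Rightarrow> 'a \<Rightarrow> bool" where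
  "transfer E ss Ms v w \<longleftrightarrow>
     mm_endpoint (greedy_matching ss) Ms w \<and>
     {v, w} \<in> E - (greedy_matching ss \<union> Ms) \<and>
     (\<exists>i<length ss. v \<in> {fst (ss ! i), snd (ss ! i)} \<and>
        deg (cur E ss (Suc i)) w < deg (cur E ss i) w \<and>
        deg (cur E ss (Suc i)) w \<le> 1)"

end

theory Submission
  imports Defs
begin

(* Let x be the neighbour of the endpoint w on the path. The node w is never matched and
   {w, x} is the only edge of M \<union> M* at w, so an edge {v, w} removed when some v \<noteq> x is
   matched lies in F; if the degree of w drops to at most 1 in that step, it is a transfer.
   When the first node of the path is matched, w still has degree at least 2: that node is
   interior, so it has two path edges, and MinGreedy chose it of minimum degree. As the degree
   of w ends at 0, it drops below 2 in some step and below 1 in a later one; without a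
   transfer both drops would be caused by matching x, which happens only once. The two
   endpoints of the path are distinct, which gives two transfers. *)

abbreviation step_edge :: "('a \<times> 'a) list \<Rightarrow> nat \<Rightarrow> 'a set" where
  "step_edge ss i \<equiv> {fst (ss ! i), snd (ss ! i)}"

lemma rev_nth_doubleton:
  "Suc j < length p \<Longrightarrow>
     {rev p ! j, rev p ! Suc j} = {p ! (length p - 2 - j), p ! Suc (length p - 2 - j)}"
  by (auto simp: rev_nth Suc_diff_Suc numeral_2_eq_2)

lemma path_edges_rev: "path_edges (rev p) = path_edges p"
proof -
  have "\<exists>k. Suc k < length q \<and> {rev q ! j, rev q ! Suc j} = {q ! k, q ! Suc k}"
    if "Suc j < length q" for q :: "'b list" and j
    using that rev_nth_doubleton[OF that] by (intro exI[of _ "length q - 2 - j"]) auto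
  from this[of _ p] this[of _ "rev p"] show ?thesis
    unfolding path_edges_def by fastforce
qed

lemma path_edges_nth: "Suc j < length p \<Longrightarrow> {p ! j, p ! Suc j} \<in> path_edges p"
  unfolding path_edges_def by blast

lemma path_edges_subset_set: "e \<in> path_edges p \<Longrightarrow> e \<subseteq> set p"
  unfolding path_edges_def by auto

lemma mm_path_rev:
  assumes "mm_path M Ms p"
  shows "mm_path M Ms (rev p)"
proof -
  have "even (length p - 2 - j) \<longleftrightarrow> even j" if "Suc j < length p" for j
    using assms that unfolding mm_path_def by simp
  then show ?thesis
    using assms rev_nth_doubleton[of _ p] unfolding mm_path_def path_edges_rev
    by auto
qed

lemma mm_path_hd_neq_last: "mm_path M Ms p \<Longrightarrow> hd p \<noteq> last p"
  unfolding mm_path_def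
  by (cases p) (auto simp: last_conv_nth nth_eq_iff_index_eq)

lemma mm_path_subset: "mm_path M Ms p \<Longrightarrow> path_edges p \<subseteq> M \<union> Ms"
  unfolding mm_path_def path_edges_def by (auto; metis)

lemma mm_path_edge_meeting:
  "mm_path M Ms p \<Longrightarrow> e \<in> M \<union> Ms \<Longrightarrow> e \<inter> set p \<noteq> {} \<Longrightarrow> e \<in> path_edges p"
  unfolding mm_path_def by blast

lemma mm_path_hd_edges:
  assumes "mm_path M Ms p"
  shows "{hd p, p ! 1} \<in> path_edges p" "{p ! 1, p ! 2} \<in> M"
    "p ! 2 \<noteq> hd p" "\<forall>e \<in> M \<union> Ms. hd p \<in> e \<longrightarrow> e = {hd p, p ! 1}"
proof -
  have p: "distinct p" "4 \<le> length p"
    using assms unfolding mm_path_def by auto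
  have alt: "\<And>j. Suc j < length p \<Longrightarrow> odd j \<Longrightarrow> {p ! j, p ! Suc j} \<in> M"
    using assms unfolding mm_path_def by blast
  have hd: "hd p = p ! 0" using p(2) by (cases p) auto
  show "{hd p, p ! 1} \<in> path_edges p" using path_edges_nth[of 0 p] p(2) hd by simp
  show "{p ! 1, p ! 2} \<in> M" using alt[of 1] p by (simp add: numeral_2_eq_2)
  have "2 < length p" "0 < length p" using p(2) by auto
  then show "p ! 2 \<noteq> hd p" using hd nth_eq_iff_index_eq[OF p(1), of 2 0] by simp
  show "\<forall>e \<in> M \<union> Ms. hd p \<in> e \<longrightarrow> e = {hd p, p ! 1}"
  proof (intro ballI impI)
    fix e assume e: "e \<in> M \<union> Ms" "hd p \<in> e"
    have "hd p \<in> set p" using p(2) by (cases p) auto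
    with e have "e \<in> path_edges p" using mm_path_edge_meeting[OF assms] by blast
    then obtain j where j: "e = {p ! j, p ! Suc j}" "Suc j < length p"
      unfolding path_edges_def by auto
    have "p ! 0 = p ! j \<or> p ! 0 = p ! Suc j" using e(2) hd j(1) by simp
    moreover have "0 < length p" "j < length p" using j(2) by linarith+
    ultimately have "j = 0"
      using j(2) nth_eq_iff_index_eq[OF p(1), of 0 j] nth_eq_iff_index_eq[OF p(1), of 0 "Suc j"]
      by (blast dest: Zero_neq_Suc)
    then show "e = {hd p, p ! 1}" using j hd by simp
  qed
qed

lemma mm_path_endpoint_edges:
  assumes "mm_path M Ms p" "w \<in> {hd p, last p}"
  obtains x y where "{w, x} \<in> path_edges p" "{x, y} \<in> M" "y \<noteq> w"
    "\<forall>e \<in> M \<union> Ms. w \<in> e \<longrightarrow> e = {w, x}"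
proof -
  have "\<exists>q. mm_path M Ms q \<and> path_edges q = path_edges p \<and> w = hd q"
  proof (cases "w = hd p")
    case False
    then have "w = hd (rev p)" using assms(2) by (simp add: hd_rev)
    then show ?thesis using mm_path_rev[OF assms(1)] path_edges_rev by blast
  qed (use assms(1) in blast)
  then obtain q where q: "mm_path M Ms q" "path_edges q = path_edges p" "w = hd q"
    by blast
  show thesis
  proof (rule that)
    show "{q ! 1, q ! 2} \<in> M" "q ! 2 \<noteq> w"
      "\<forall>e \<in> M \<union> Ms. w \<in> e \<longrightarrow> e = {w, q ! 1}"
      using mm_path_hd_edges[OF q(1)] q(3) by simp_all
    show "{w, q ! 1} \<in> path_edges p" using mm_path_hd_edges(1)[OF q(1)] q(2,3) by simp
  qed
qed

lemma interior_vertex_two_path_edges: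
  assumes "distinct p" "u \<in> set p" "u \<notin> {hd p, last p}"
  obtains e1 e2 where "e1 \<in> path_edges p" "e2 \<in> path_edges p" "e1 \<noteq> e2" "u \<in> e1" "u \<in> e2"
proof -
  obtain a where a: "a < length p" "u = p ! a" using assms(2) by (metis in_set_conv_nth)
  have "a \<noteq> 0" using a assms(3) hd_conv_nth by fastforce
  then obtain b where b: "a = Suc b" using not0_implies_Suc by blast
  have "Suc a < length p"
  proof (rule ccontr)
    assume "\<not> Suc a < length p"
    then have "a = length p - 1" using a(1) by linarith
    then have "u = last p" using a last_conv_nth[of p] by force
    with assms(3) show False by simp
  qed
  show thesis
  proof (rule that)
    show "{p ! b, p ! a} \<in> path_edges p" "{p ! a, p ! Suc a} \<in> path_edges p"
      using path_edges_nth[of b p] path_edges_nth[of a p] a b \<open>Suc a < length p\<close> by auto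
    show "{p ! b, p ! a} \<noteq> {p ! a, p ! Suc a}"
      using assms(1) a b \<open>Suc a < length p\<close> by (auto simp: doubleton_eq_iff nth_eq_iff_index_eq)
  qed (use a in auto)
qed

lemma cur_subset: "cur E ss i \<subseteq> E"
  unfolding cur_def by auto

lemma cur_Suc: "cur E ss (Suc i) = {e \<in> cur E ss i. e \<inter> step_edge ss i = {}}"
  unfolding cur_def by (auto simp: less_Suc_eq)

lemma mingreedy_run_step_edge_cur:
  "mingreedy_run E ss \<Longrightarrow> i < length ss \<Longrightarrow> step_edge ss i \<in> cur E ss i"
  unfolding mingreedy_run_def by blast

lemma mingreedy_run_min_degree:
  "mingreedy_run E ss \<Longrightarrow> i < length ss \<Longrightarrow> 0 < deg (cur E ss i) x \<Longrightarrow>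
     deg (cur E ss i) (fst (ss ! i)) \<le> deg (cur E ss i) x"
  unfolding mingreedy_run_def by blast

lemma mingreedy_run_cur_length: "mingreedy_run E ss \<Longrightarrow> cur E ss (length ss) = {}"
  unfolding mingreedy_run_def by blast

lemma mingreedy_run_matched_once:
  assumes "mingreedy_run E ss" "i < j" "j < length ss"
  shows "step_edge ss i \<inter> step_edge ss j = {}"
  using mingreedy_run_step_edge_cur[OF assms(1,3)] assms(2) unfolding cur_def by blast

lemma greedy_matching_iff: "e \<in> greedy_matching ss \<longleftrightarrow> (\<exists>i < length ss. e = step_edge ss i)"
  unfolding greedy_matching_def by (auto simp: in_set_conv_nth) (metis prod.collapse)

lemma matching_subset: "matching E M \<Longrightarrow> M \<subseteq> E"
  unfolding matching_def by blast

lemma matching_disjoint: "matching E M \<Longrightarrow> e \<in> M \<Longrightarrow> f \<in> M \<Longrightarrow> e \<noteq> f \<Longrightarrow> e \<inter> f = {}"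
  unfolding matching_def by blast

lemma mingreedy_run_matching:
  assumes run: "mingreedy_run E ss"
  shows "matching E (greedy_matching ss)"
  unfolding matching_def
proof
  show "greedy_matching ss \<subseteq> E"
    using mingreedy_run_step_edge_cur[OF run] cur_subset[of E ss]
    unfolding subset_iff greedy_matching_iff by blast
  show "\<forall>e \<in> greedy_matching ss. \<forall>f \<in> greedy_matching ss. e \<noteq> f \<longrightarrow> e \<inter> f = {}"
  proof (intro ballI impI)
    fix e f assume "e \<in> greedy_matching ss" "f \<in> greedy_matching ss" "e \<noteq> f"
    then obtain i j where ij: "i < length ss" "e = step_edge ss i" "j < length ss" "f = step_edge ss j"
      "i \<noteq> j"
      unfolding greedy_matching_iff by blast
    then consider "i < j" | "j < i" by linarith
    then show "e \<inter> f = {}"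
      by cases (use mingreedy_run_matched_once[OF run] ij in blast)+
  qed
qed

lemma simple_graph_edge_subset: "simple_graph V E \<Longrightarrow> e \<in> E \<Longrightarrow> e \<subseteq> V"
  unfolding simple_graph_def by fast

lemma simple_graph_finite_edges: "simple_graph V E \<Longrightarrow> finite E"
proof -
  assume sg: "simple_graph V E"
  then have "E \<subseteq> Pow V" using simple_graph_edge_subset by blast
  moreover have "finite V" using sg unfolding simple_graph_def by simp
  ultimately show "finite E" by (meson finite_Pow_iff finite_subset)
qed

lemma simple_graph_edge_eq:
  "simple_graph V E \<Longrightarrow> e \<in> E \<Longrightarrow> x \<in> e \<Longrightarrow> y \<in> e \<Longrightarrow> x \<noteq> y \<Longrightarrow> e = {x, y}"
  unfolding simple_graph_def by fast

lemma deg_pos: "finite G \<Longrightarrow> e \<in> G \<Longrightarrow> x \<in> e \<Longrightarrow> 0 < deg G x"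
  unfolding deg_def by (auto simp: card_gt_0_iff)

lemma deg_ge_two:
  assumes "finite G" "e1 \<in> G" "e2 \<in> G" "e1 \<noteq> e2" "x \<in> e1" "x \<in> e2"
  shows "2 \<le> deg G x"
proof -
  have "card {e1, e2} \<le> card {e \<in> G. x \<in> e}"
    using assms by (intro card_mono) auto
  then show ?thesis using assms(4) unfolding deg_def by simp
qed

lemma deg_drop_single_edge:
  assumes "finite G" "G' \<subseteq> G" "{e \<in> G - G'. x \<in> e} \<subseteq> {f}" "deg G' x < deg G x"
  shows "f \<in> G - G'" "deg G' x = deg G x - 1"
proof -
  define B where "B = {e \<in> G - G'. x \<in> e}"
  have split: "{e \<in> G'. x \<in> e} = {e \<in> G. x \<in> e} - B" "B \<subseteq> {e \<in> G. x \<in> e}"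
    using assms(2) unfolding B_def by auto
  have card: "deg G' x = deg G x - card B"
    unfolding deg_def split(1) using assms(1) split(2) by (simp add: card_Diff_subset finite_subset)
  then have "B \<noteq> {}" using assms(4) by auto
  then have "B = {f}" using assms(3) unfolding B_def by blast
  then show "f \<in> G - G'" "deg G' x = deg G x - 1" using card unfolding B_def by auto
qed

lemma last_step_at_least:
  fixes D :: "nat \<Rightarrow> nat"
  assumes "D L = 0" "k < L" "0 < t" "t \<le> D k"
  obtains j where "k \<le> j" "j < L" "t \<le> D j" "D (Suc j) < t"
proof -
  have "t \<le> D n \<longrightarrow> (\<exists>j. n \<le> j \<and> j < L \<and> t \<le> D j \<and> D (Suc j) < t)" if "n \<le> L" for n
    using that
  proof (induction n rule: inc_induct)
    case base
    then show ?case using assms(1,3) by simp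
  next
    case (step n)
    then show ?case using Suc_leD not_less by blast
  qed
  then show thesis using assms(2,4) that less_imp_le by blast
qed

lemma mm_path_endpoint_unmatched:
  assumes run: "mingreedy_run E ss" and mp: "mm_path (greedy_matching ss) Ms p"
    and w: "w \<in> {hd p, last p}" and i: "i < length ss"
  shows "w \<notin> step_edge ss i"
proof
  assume w_i: "w \<in> step_edge ss i"
  obtain x y where xy: "{x, y} \<in> greedy_matching ss" "y \<noteq> w"
    and only: "\<forall>e \<in> greedy_matching ss \<union> Ms. w \<in> e \<longrightarrow> e = {w, x}"
    using mm_path_endpoint_edges[OF mp w] by metis
  have step_M: "step_edge ss i \<in> greedy_matching ss" using i greedy_matching_iff by blast
  moreover have "step_edge ss i = {w, x}" using only UnI1[OF step_M] w_i by simp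
  ultimately have "{w, x} \<in> greedy_matching ss" by simp
  moreover have "{w, x} \<noteq> {x, y}" using xy(2) by (auto simp: doubleton_eq_iff)
  ultimately have "{w, x} \<inter> {x, y} = {}"
    using matching_disjoint[OF mingreedy_run_matching[OF run]] xy(1) by blast
  then show False by blast
qed

lemma mm_path_endpoint_degree_ge_two:
  assumes sg: "simple_graph V E" and run: "mingreedy_run E ss" and Ms: "Ms \<subseteq> E"
    and mp: "mm_path (greedy_matching ss) Ms p" and w: "w \<in> {hd p, last p}"
  shows "\<exists>k < length ss. 2 \<le> deg (cur E ss k) w"
proof -
  let ?M = "greedy_matching ss"
  obtain x y where wx: "{w, x} \<in> path_edges p" and xy: "{x, y} \<in> ?M"
    using mm_path_endpoint_edges[OF mp w] by metis
  have "x \<in> set p" using path_edges_subset_set[OF wx] by blast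
  moreover obtain i where "i < length ss" "{x, y} = step_edge ss i"
    using xy[unfolded greedy_matching_iff] by (elim exE conjE) (rule that)
  ultimately have touched: "\<exists>i. i < length ss \<and> step_edge ss i \<inter> set p \<noteq> {}"
    by (metis disjoint_iff insertI1)
  define k where "k = (LEAST i. i < length ss \<and> step_edge ss i \<inter> set p \<noteq> {})"
  have k: "k < length ss" "step_edge ss k \<inter> set p \<noteq> {}"
    using LeastI_ex[OF touched] unfolding k_def by auto
  have untouched: "step_edge ss j \<inter> set p = {}" if "j < k" for j
    using not_less_Least[of j "\<lambda>i. i < length ss \<and> step_edge ss i \<inter> set p \<noteq> {}"] that k(1)
    unfolding k_def by simp
  have finite_cur: "finite (cur E ss k)"
    by (rule finite_subset[OF cur_subset simple_graph_finite_edges[OF sg]])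
  have path_cur: "path_edges p \<subseteq> cur E ss k"
  proof
    fix e assume e: "e \<in> path_edges p"
    then have "e \<in> E"
      using mm_path_subset[OF mp] Ms matching_subset[OF mingreedy_run_matching[OF run]] by blast
    then show "e \<in> cur E ss k"
      using path_edges_subset_set[OF e] untouched unfolding cur_def by blast
  qed
  define u where "u = fst (ss ! k)"
  have "step_edge ss k \<in> path_edges p"
    using mm_path_edge_meeting[OF mp] k greedy_matching_iff by blast
  then have "u \<in> set p" unfolding u_def using path_edges_subset_set by blast
  moreover have "u \<notin> {hd p, last p}"
    using mm_path_endpoint_unmatched[OF run mp _ k(1)] unfolding u_def by blast
  moreover have "distinct p" using mp unfolding mm_path_def by simp
  ultimately obtain e1 e2 where "e1 \<in> path_edges p" "e2 \<in> path_edges p" "e1 \<noteq> e2" "u \<in> e1" "u \<in> e2"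
    using interior_vertex_two_path_edges by metis
  then have "2 \<le> deg (cur E ss k) u" using deg_ge_two[OF finite_cur] path_cur by blast
  also have "deg (cur E ss k) u \<le> deg (cur E ss k) w"
    using mingreedy_run_min_degree[OF run k(1)] deg_pos[OF finite_cur] wx path_cur
    unfolding u_def by blast
  finally show ?thesis using k(1) by blast
qed

lemma mm_path_endpoint_degree_drop:
  assumes sg: "simple_graph V E" and run: "mingreedy_run E ss"
    and mp: "mm_path (greedy_matching ss) Ms p" and w: "w \<in> {hd p, last p}"
    and only: "\<forall>e \<in> greedy_matching ss \<union> Ms. w \<in> e \<longrightarrow> e = {w, x}"
    and no_transfer: "\<nexists>v. transfer E ss Ms v w"
    and i: "i < length ss"
    and drop: "deg (cur E ss (Suc i)) w < deg (cur E ss i) w" "deg (cur E ss (Suc i)) w \<le> 1"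
  shows "x \<in> step_edge ss i" "deg (cur E ss (Suc i)) w = deg (cur E ss i) w - 1"
proof -
  have unmatched: "w \<notin> step_edge ss i" using mm_path_endpoint_unmatched[OF run mp w i] .
  have removed: "{e \<in> cur E ss i - cur E ss (Suc i). w \<in> e} \<subseteq> {{w, x}}"
  proof
    fix e assume "e \<in> {e \<in> cur E ss i - cur E ss (Suc i). w \<in> e}"
    then have e: "e \<in> cur E ss i" "w \<in> e" "e \<inter> step_edge ss i \<noteq> {}" unfolding cur_Suc by auto
    then obtain v where v: "v \<in> step_edge ss i" "v \<in> e" by blast
    have "v \<noteq> w" using v(1) unmatched by blast
    have "e \<in> E" using e(1) cur_subset by blast
    then have e_vw: "e = {v, w}" using simple_graph_edge_eq[OF sg _ v(2) e(2) \<open>v \<noteq> w\<close>] by simp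
    have "e \<in> greedy_matching ss \<union> Ms"
    proof (rule ccontr)
      assume "e \<notin> greedy_matching ss \<union> Ms"
      then have "{v, w} \<in> E - (greedy_matching ss \<union> Ms)" using \<open>e \<in> E\<close> e_vw by simp
      moreover have "mm_endpoint (greedy_matching ss) Ms w" unfolding mm_endpoint_def using mp w by blast
      ultimately have "transfer E ss Ms v w"
        unfolding transfer_def using v(1) i drop by blast
      with no_transfer show False by blast
    qed
    then show "e \<in> {{w, x}}" using only e(2) by simp
  qed
  have "finite (cur E ss i)"
    by (rule finite_subset[OF cur_subset simple_graph_finite_edges[OF sg]])
  moreover have "cur E ss (Suc i) \<subseteq> cur E ss i" unfolding cur_Suc by blast
  ultimately have wx: "{w, x} \<in> cur E ss i - cur E ss (Suc i)"
    and "deg (cur E ss (Suc i)) w = deg (cur E ss i) w - 1"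
    using deg_drop_single_edge[OF _ _ removed drop(1)] by simp_all
  then show "deg (cur E ss (Suc i)) w = deg (cur E ss i) w - 1" by simp
  have "{w, x} \<inter> step_edge ss i \<noteq> {}" using wx unfolding cur_Suc by simp
  then show "x \<in> step_edge ss i" using unmatched by blast
qed

lemma mm_path_endpoint_transfer:
  assumes sg: "simple_graph V E" and run: "mingreedy_run E ss" and Ms: "Ms \<subseteq> E"
    and mp: "mm_path (greedy_matching ss) Ms p" and w: "w \<in> {hd p, last p}"
  shows "\<exists>v. transfer E ss Ms v w"
proof (rule ccontr)
  assume no_transfer: "\<nexists>v. transfer E ss Ms v w"
  define D where "D i = deg (cur E ss i) w" for i
  obtain x where only: "\<forall>e \<in> greedy_matching ss \<union> Ms. w \<in> e \<longrightarrow> e = {w, x}"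
    using mm_path_endpoint_edges[OF mp w] by metis
  note drop = mm_path_endpoint_degree_drop[OF sg run mp w only no_transfer,
      folded D_def]
  have D_end: "D (length ss) = 0"
    using mingreedy_run_cur_length[OF run] unfolding D_def deg_def by simp
  obtain k where k: "k < length ss" "2 \<le> D k"
    using mm_path_endpoint_degree_ge_two[OF sg run Ms mp w] unfolding D_def by blast
  obtain j1 where j1: "j1 < length ss" "2 \<le> D j1" "D (Suc j1) < 2"
    using last_step_at_least[of D "length ss" k 2, OF D_end k(1) _ k(2)] by auto
  then have x_j1: "x \<in> step_edge ss j1" and "D (Suc j1) = 1"
    using drop[of j1] by auto
  then have "Suc j1 < length ss"
    using D_end j1(1) by (metis Suc_lessI zero_neq_one)
  then obtain j0 where j0: "Suc j1 \<le> j0" "j0 < length ss" "1 \<le> D j0" "D (Suc j0) < 1"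
    using last_step_at_least[of D "length ss" "Suc j1" 1, OF D_end] \<open>D (Suc j1) = 1\<close> by auto
  then have "x \<in> step_edge ss j0" using drop[of j0] by auto
  then show False
    using mingreedy_run_matched_once[OF run _ j0(2), of j1] j0(1) x_j1 by auto
qed

theorem lemma5:
  fixes V :: "'a set" and E :: "'a set set" and ss :: "('a \<times> 'a) list"
    and M Ms :: "'a set set" and p :: "'a list" and w :: 'a
  assumes "simple_graph V E"
    and "mingreedy_run E ss"
    and "M = greedy_matching ss"
    and "max_matching E Ms"
    and "components_ok M Ms"
    and "mm_path M Ms p"
    and "w \<in> {hd p, last p}"
  shows "(\<exists>v. transfer E ss Ms v w)
       \<and> 2 \<le> card {(v, x). x \<in> {hd p, last p} \<and> transfer E ss Ms v x}"
proof -
  let ?T = "{(v, x). x \<in> {hd p, last p} \<and> transfer E ss Ms v x}"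
  have Ms: "Ms \<subseteq> E" using assms(4) unfolding max_matching_def by (simp add: matching_subset)
  note transfer_to = mm_path_endpoint_transfer[OF assms(1,2) Ms assms(6)[unfolded assms(3)]]
  obtain v1 v2 where "transfer E ss Ms v1 (hd p)" "transfer E ss Ms v2 (last p)"
    using transfer_to by blast
  then have "{(v1, hd p), (v2, last p)} \<subseteq> ?T" by auto
  moreover have "finite ?T"
  proof (rule finite_subset)
    show "?T \<subseteq> V \<times> {hd p, last p}"
      using simple_graph_edge_subset[OF assms(1)] unfolding transfer_def by blast
    show "finite (V \<times> {hd p, last p})" using assms(1) unfolding simple_graph_def by simp
  qed
  ultimately have "card {(v1, hd p), (v2, last p)} \<le> card ?T" by (rule card_mono[rotated])
  then show ?thesis
    using transfer_to[OF assms(7)] mm_path_hd_neq_last[OF assms(6)] by simp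
qed

end
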